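(* Let $G=([n],E)$ be a connected simple graph with $n\ge2$, vertex degrees $d_i$, and $\mathsf{B}_G=\{d_j^{-1/2}E_{i,j},\ d_i^{-1/2}E_{j,i} : \{i,j\}\in E\}$. Then (1) $G$ has an independent set of size $s$ if and only if $\mathsf{B}_G$ has an isotropic space of dimension $s$; (2) $G$ has a vertex $c$-coloring (partition of $[n]$ into $c$ independent sets) if and only if $\mathsf{B}_G$ has an isotropic $c$-decomposition.
   Context: $E_{i,j}$ is the matrix with $(i,j)$ entry $1$ and others $0$. For a finite set $\mathsf{B}\subseteq\mathrm{M}(n,\mathbb{C})$, an isotropic space is a subspace $U\le\mathbb{C}^n$ with $u^\dagger Bu'=0$ for all $u,u'\in U$ and all $B\in\mathsf{B}$ ($\dagger$ = conjugate transpose). An isotropic $c$-decomposition of $\mathsf{B}$ is an orthogonal (w.r.t. the standard Hermitian inner product) direct sum decomposition $\mathbb{C}^n=U_1\oplus\cdots\oplus U_c$ into $c$ nonzero isotropic spaces of $\mathsf{B}$. *)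

theory Defs
  imports "HOL-Analysis.Analysis"
begin

(* Graphs on the vertex type 'n (finite, playing the role of [n]); edges are 2-element sets. *)
definition simple_graph :: "'n set set \<Rightarrow> bool" where
  "simple_graph E \<longleftrightarrow> (\<forall>e\<in>E. \<exists>i j. i \<noteq> j \<and> e = {i, j})"

definition graph_connected :: "'n set set \<Rightarrow> bool" where
  "graph_connected E \<longleftrightarrow> (\<forall>i j. (\<lambda>a b. {a, b} \<in> E)\<^sup>*\<^sup>* i j)"

definition degree :: "'n set set \<Rightarrow> 'n \<Rightarrow> nat" where
  "degree E i = card {j. {i, j} \<in> E}"

definition independent_set :: "'n set set \<Rightarrow> 'n set \<Rightarrow> bool" where
  "independent_set E S \<longleftrightarrow> (\<forall>i\<in>S. \<forall>j\<in>S. {i, j} \<notin> E)"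

definition has_vertex_coloring :: "'n set set \<Rightarrow> nat \<Rightarrow> bool" where
  "has_vertex_coloring E c \<longleftrightarrow> (\<exists>V :: nat \<Rightarrow> 'n set.
      (\<forall>k<c. V k \<noteq> {} \<and> independent_set E (V k)) \<and>
      (\<forall>k<c. \<forall>l<c. k \<noteq> l \<longrightarrow> V k \<inter> V l = {}) \<and>
      (\<Union>k<c. V k) = UNIV)"

definition matrix_unit :: "'n \<Rightarrow> 'n \<Rightarrow> complex^'n^'n" where
  "matrix_unit i j = (\<chi> a b. if a = i \<and> b = j then 1 else 0)"

definition scale_matrix :: "complex \<Rightarrow> complex^'n^'n \<Rightarrow> complex^'n^'n" where
  "scale_matrix t M = (\<chi> a b. t * M $ a $ b)"

definition sesq :: "complex^'n^'n \<Rightarrow> complex^'n \<Rightarrow> complex^'n \<Rightarrow> complex" where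
  "sesq B u v = (\<Sum>i\<in>UNIV. \<Sum>j\<in>UNIV. cnj (u $ i) * (B $ i $ j) * v $ j)"

definition herm_inner :: "complex^'n \<Rightarrow> complex^'n \<Rightarrow> complex" where
  "herm_inner u v = (\<Sum>i\<in>UNIV. cnj (u $ i) * v $ i)"

definition graph_matrices :: "'n set set \<Rightarrow> (complex^'n^'n) set" where
  "graph_matrices E = {scale_matrix (complex_of_real (1 / sqrt (real (degree E j)))) (matrix_unit i j)
                       | i j. {i, j} \<in> E}"

definition isotropic_space :: "(complex^'n^'n) set \<Rightarrow> (complex^'n) set \<Rightarrow> bool" where
  "isotropic_space Bs U \<longleftrightarrow> vec.subspace U \<and>
     (\<forall>u\<in>U. \<forall>v\<in>U. \<forall>B\<in>Bs. sesq B u v = 0)"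

definition isotropic_decomposition :: "(complex^'n^'n) set \<Rightarrow> nat \<Rightarrow> bool" where
  "isotropic_decomposition Bs c \<longleftrightarrow> (\<exists>U :: nat \<Rightarrow> (complex^'n) set.
      (\<forall>k<c. isotropic_space Bs (U k) \<and> U k \<noteq> {0}) \<and>
      (\<forall>k<c. \<forall>l<c. k \<noteq> l \<longrightarrow> (\<forall>u\<in>U k. \<forall>v\<in>U l. herm_inner u v = 0)) \<and>
      (\<forall>w :: nat \<Rightarrow> complex^'n. (\<forall>k<c. w k \<in> U k) \<and> (\<Sum>k<c. w k) = 0 \<longrightarrow> (\<forall>k<c. w k = 0)) \<and>
      vec.span (\<Union>k<c. U k) = UNIV)"

end

theory Submission
  imports Defs
begin

text \<open>
  Every matrix of \<open>graph_matrices E\<close> is a matrix unit \<open>E\<^sub>i\<^sub>j\<close> of an edge scaled by a positive factor,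
  pairing \<open>u\<close> and \<open>v\<close> to a nonzero multiple of \<open>cnj (u $ i) * v $ j\<close>. So a subspace is isotropic
  exactly when no edge joins two vertices of its joint support. Hence the coordinate subspace of an
  independent set \<open>S\<close> is isotropic of dimension \<open>card S\<close>, while an isotropic subspace lies in the
  coordinate subspace of its support, an independent set of at least its dimension.

  Colour classes give orthogonal coordinate subspaces forming an isotropic decomposition.
  Conversely, colouring each vertex by the first summand whose support contains it is proper; some
  colours may be unused, but \<open>c\<close> nonzero summands of a direct sum force \<open>c \<le> n\<close>, so repeatedly
  recolouring one of two equally coloured vertices with an unused colour yields a colouring with
  exactly \<open>c\<close> nonempty classes.
\<close>

lemma sesq_scale_matrix_unit:
  "sesq (scale_matrix t (matrix_unit i j)) u v = cnj (u $ i) * t * v $ j"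
proof -
  have entry: "cnj (u $ a) * (t * (if a = i \<and> b = j then 1 else 0)) * v $ b
      = (if b = j then if a = i then cnj (u $ i) * t * v $ j else 0 else 0)" for a b
    by simp
  show ?thesis
    unfolding sesq_def scale_matrix_def matrix_unit_def by (simp only: vec_lambda_beta entry) simp
qed

definition joint_support :: "('a::zero^'n) set \<Rightarrow> 'n set" where
  "joint_support U = {i. \<exists>u\<in>U. u $ i \<noteq> 0}"

definition coord_subspace :: "'n set \<Rightarrow> ('a::zero^'n) set" where
  "coord_subspace S = {u. \<forall>i. i \<notin> S \<longrightarrow> u $ i = 0}"

lemma subset_coord_subspace_joint_support: "U \<subseteq> coord_subspace (joint_support U)"
  by (auto simp: coord_subspace_def joint_support_def)

lemma axis_in_coord_subspace_iff [simp]: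
  "axis i (1::'a::zero_neq_one) \<in> coord_subspace S \<longleftrightarrow> i \<in> S"
  by (auto simp: coord_subspace_def axis_def)

lemma subspace_coord_subspace: "vec.subspace (coord_subspace S)"
  unfolding vec.subspace_def coord_subspace_def by auto

lemma coord_subspace_subset_span_axis:
  "coord_subspace S \<subseteq> vec.span ((\<lambda>i. axis i 1) ` (S :: 'n::finite set))"
proof
  fix u :: "'a::field^'n" assume u: "u \<in> coord_subspace S"
  have "u = (\<Sum>i\<in>S. u $ i *s axis i 1)"
    using u by (auto simp: vec_eq_iff coord_subspace_def axis_def if_distrib[where f="\<lambda>x. _ * x"]
        cong: if_cong)
  also have "\<dots> \<in> vec.span ((\<lambda>i. axis i 1) ` S)"
    by (intro vec.span_sum vec.span_scale vec.span_base) auto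
  finally show "u \<in> vec.span ((\<lambda>i. axis i 1) ` S)" .
qed

lemma dim_coord_subspace:
  "vec.dim (coord_subspace S :: ('a::field^'n::finite) set) = card S"
proof (rule antisym)
  let ?B = "(\<lambda>i. axis i (1::'a)) ` S"
  have card_B: "card ?B = card S"
    by (rule card_image) (auto simp: inj_on_def axis_eq_axis)
  have "vec.dim (coord_subspace S :: ('a^'n) set) \<le> card ?B"
    by (rule vec.dim_le_card[OF coord_subspace_subset_span_axis]) simp
  then show "vec.dim (coord_subspace S :: ('a^'n) set) \<le> card S"
    using card_B by simp
  have "vec.independent ?B"
    by (rule vec.independent_mono[OF independent_cart_basis]) (auto simp: cart_basis_def)
  moreover have "?B \<subseteq> coord_subspace S"
    by auto
  ultimately show "card S \<le> vec.dim (coord_subspace S :: ('a^'n) set)"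
    using vec.independent_bound_general vec.dim_subset card_B by (metis order_trans)
qed

lemma span_coord_subspaces_eq_UNIV:
  assumes "(\<Union>k\<in>K. V k) = UNIV"
  shows "vec.span (\<Union>k\<in>K. coord_subspace (V k) :: ('a::field^'n::finite) set) = UNIV"
proof -
  have "cart_basis \<subseteq> (\<Union>k\<in>K. coord_subspace (V k) :: ('a^'n) set)"
    using assms by (force simp: cart_basis_def)
  then show ?thesis
    using vec.span_mono[of cart_basis] by auto
qed

lemma joint_support_eq_UNIV_if_span_eq_UNIV:
  assumes "vec.span U = (UNIV :: ('a::field^'n) set)"
  shows "joint_support U = UNIV"
proof (rule ccontr)
  assume "joint_support U \<noteq> UNIV"
  then obtain i where "\<forall>u\<in>U. u $ i = 0"
    by (auto simp: joint_support_def)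
  then have "U \<subseteq> {v. v $ i = 0}"
    by auto
  moreover have "vec.subspace {v :: 'a^'n. v $ i = 0}"
    unfolding vec.subspace_def by auto
  ultimately have "vec.span U \<subseteq> {v. v $ i = 0}"
    by (rule vec.span_minimal)
  then show False
    using assms by (auto simp: axis_def dest: subsetD[of _ _ "axis i 1"])
qed

lemma herm_inner_coord_subspaces_disjoint:
  assumes "S \<inter> T = {}" "u \<in> coord_subspace S" "v \<in> coord_subspace T"
  shows "herm_inner u v = 0"
  unfolding herm_inner_def using assms by (intro sum.neutral) (auto simp: coord_subspace_def)

lemma coord_subspaces_direct:
  fixes w :: "nat \<Rightarrow> 'a::comm_monoid_add^'n"
  assumes disjoint: "\<forall>k<c. \<forall>l<c. k \<noteq> l \<longrightarrow> V k \<inter> V l = {}"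
    and w: "\<forall>k<c. w k \<in> coord_subspace (V k)" and sum_w: "(\<Sum>k<c. w k) = 0" and "k < c"
  shows "w k = 0"
proof (rule vec_eq_iff[THEN iffD2], rule allI)
  fix i
  show "w k $ i = 0 $ i"
  proof (cases "i \<in> V k")
    case False
    then show ?thesis using w \<open>k < c\<close> by (simp add: coord_subspace_def)
  next
    case True
    have "i \<notin> V l" if "l \<in> {..<c} - {k}" for l
      using True disjoint that \<open>k < c\<close> by blast
    then have "w l $ i = 0" if "l \<in> {..<c} - {k}" for l
      using w that by (simp add: coord_subspace_def)
    moreover have "(\<Sum>l<c. w l $ i) = w k $ i + (\<Sum>l\<in>{..<c} - {k}. w l $ i)"
      using \<open>k < c\<close> by (intro sum.remove) auto
    ultimately show ?thesis
      using sum_w by (simp flip: sum_component)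
  qed
qed

lemma card_le_CARD_if_direct_sum:
  fixes U :: "nat \<Rightarrow> ('a::field^'n::finite) set"
  assumes nonzero: "\<forall>k<c. vec.subspace (U k) \<and> U k \<noteq> {0}"
    and direct: "\<forall>w. (\<forall>k<c. w k \<in> U k) \<and> (\<Sum>k<c. w k) = 0 \<longrightarrow> (\<forall>k<c. w k = 0)"
  shows "c \<le> CARD('n)"
proof -
  have "\<exists>u. u \<in> U k \<and> u \<noteq> 0" if "k < c" for k
    using nonzero vec.subspace_0 that by blast
  then obtain w where w: "\<And>k. k < c \<Longrightarrow> w k \<in> U k \<and> w k \<noteq> 0"
    by metis
  have lin_indep: "a k = 0"
    if "(\<Sum>l<c. a l *s w l) = 0" "k < c" for a k
  proof -
    have "\<forall>l<c. a l *s w l \<in> U l"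
      using nonzero w by (auto intro: vec.subspace_scale)
    then have "a k *s w k = 0"
      using direct[rule_format, of "\<lambda>l. a l *s w l"] that by blast
    then show ?thesis
      using w \<open>k < c\<close> by simp
  qed
  have "inj_on w {..<c}"
  proof (rule inj_onI, rule ccontr)
    fix k l assume kl: "k \<in> {..<c}" "l \<in> {..<c}" "w k = w l" "k \<noteq> l"
    define a :: "nat \<Rightarrow> 'a" where "a m = (if m = k then 1 else if m = l then -1 else 0)" for m
    have "(\<Sum>m<c. a m *s w m) = (\<Sum>m\<in>{k, l}. a m *s w m)"
      using kl by (intro sum.mono_neutral_right) (auto simp: a_def)
    also have "\<dots> = w k - w l"
      using kl by (simp add: a_def)
    finally have "(\<Sum>m<c. a m *s w m) = 0"
      using kl by simp
    then have "a k = 0"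
      using lin_indep kl by blast
    then show False
      by (simp add: a_def)
  qed
  have "vec.independent (w ` {..<c})"
  proof (rule vec.independent_if_scalars_zero)
    fix a v assume "(\<Sum>x\<in>w ` {..<c}. a x *s x) = 0" "v \<in> w ` {..<c}"
    moreover have "(\<Sum>x\<in>w ` {..<c}. a x *s x) = (\<Sum>m<c. a (w m) *s w m)"
      using sum.reindex[OF \<open>inj_on w {..<c}\<close>] by simp
    ultimately show "a v = 0"
      using lin_indep[of "a \<circ> w"] by auto
  qed simp
  then have "card (w ` {..<c}) \<le> vec.dim (w ` {..<c})"
    by (rule vec.independent_bound_general[THEN conjunct2])
  also have "\<dots> \<le> CARD('n)"
    by (rule dim_subset_UNIV_cart_gen)
  finally show ?thesis
    using card_image[OF \<open>inj_on w {..<c}\<close>] by simp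
qed

lemma degree_pos_if_edge:
  fixes E :: "('n::finite) set set"
  assumes "{i, j} \<in> E"
  shows "degree E j > 0"
proof -
  have "i \<in> {k. {j, k} \<in> E}"
    using assms by (simp add: insert_commute)
  then show ?thesis
    unfolding degree_def by (metis card_gt_0_iff empty_iff finite)
qed

lemma graph_matrices_memI:
  "{i, j} \<in> E \<Longrightarrow>
    scale_matrix (complex_of_real (1 / sqrt (real (degree E j)))) (matrix_unit i j) \<in> graph_matrices E"
  unfolding graph_matrices_def by blast

lemma independent_set_subset: "independent_set E T \<Longrightarrow> S \<subseteq> T \<Longrightarrow> independent_set E S"
  unfolding independent_set_def by blast

lemma independent_set_joint_support:
  fixes E :: "('n::finite) set set"
  assumes "isotropic_space (graph_matrices E) U"
  shows "independent_set E (joint_support U)"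
  unfolding independent_set_def
proof (intro ballI notI)
  fix i j assume "i \<in> joint_support U" "j \<in> joint_support U" and edge: "{i, j} \<in> E"
  then obtain u v where uv: "u \<in> U" "u $ i \<noteq> 0" "v \<in> U" "v $ j \<noteq> 0"
    unfolding joint_support_def by blast
  have "sesq (scale_matrix (complex_of_real (1 / sqrt (real (degree E j)))) (matrix_unit i j)) u v = 0"
    using assms graph_matrices_memI[OF edge] uv unfolding isotropic_space_def by blast
  then show False
    using uv degree_pos_if_edge[OF edge] by (simp add: sesq_scale_matrix_unit)
qed

lemma isotropic_space_coord_subspace:
  fixes S :: "'n::finite set"
  assumes "independent_set E S"
  shows "isotropic_space (graph_matrices E) (coord_subspace S)"
  unfolding isotropic_space_def
proof (intro conjI ballI subspace_coord_subspace)
  fix u v :: "complex^'n" and B assume "u \<in> coord_subspace S" "v \<in> coord_subspace S" "B \<in> graph_matrices E"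
  moreover obtain i j where "{i, j} \<in> E"
    and "B = scale_matrix (complex_of_real (1 / sqrt (real (degree E j)))) (matrix_unit i j)"
    using \<open>B \<in> graph_matrices E\<close> unfolding graph_matrices_def by blast
  moreover have "i \<notin> S \<or> j \<notin> S"
    using assms \<open>{i, j} \<in> E\<close> unfolding independent_set_def by blast
  ultimately show "sesq B u v = 0"
    by (auto simp: sesq_scale_matrix_unit coord_subspace_def)
qed

definition proper_coloring :: "'n set set \<Rightarrow> nat \<Rightarrow> ('n \<Rightarrow> nat) \<Rightarrow> bool" where
  "proper_coloring E c f \<longleftrightarrow> (\<forall>x. f x < c) \<and> (\<forall>x y. f x = f y \<longrightarrow> {x, y} \<notin> E)"

lemma has_vertex_coloring_if_surj_proper_coloring:
  assumes "proper_coloring E c f" "{..<c} \<subseteq> range f"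
  shows "has_vertex_coloring E c"
  unfolding has_vertex_coloring_def
proof (intro exI[of _ "\<lambda>k. f -` {k}"] conjI allI impI)
  fix k assume "k < c"
  then show "f -` {k} \<noteq> {}"
    using assms(2) by auto
  show "independent_set E (f -` {k})"
    using assms(1) unfolding proper_coloring_def independent_set_def by auto
next
  show "(\<Union>k<c. f -` {k}) = UNIV"
    using assms(1) unfolding proper_coloring_def by auto
qed auto

lemma proper_coloring_fun_upd_unused:
  assumes "proper_coloring E c f" "k < c" "k \<notin> range f"
  shows "proper_coloring E c (f(x := k))"
  unfolding proper_coloring_def
proof (intro conjI allI impI)
  fix a b assume "(f(x := k)) a = (f(x := k)) b"
  then have "f a = f b"
    using assms(3) by (auto split: if_splits intro: rangeI)
  then show "{a, b} \<notin> E"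
    using assms(1) unfolding proper_coloring_def by blast
qed (use assms in \<open>auto simp: proper_coloring_def\<close>)

lemma range_fun_upd_collision:
  assumes "f x = f y" "x \<noteq> y"
  shows "range (f(x := k)) = insert k (range f)"
  using assms by (auto simp: image_def) (metis fun_upd_other)

lemma has_vertex_coloring_if_proper_coloring:
  fixes f :: "'n::finite \<Rightarrow> nat"
  assumes "proper_coloring E c f" "c \<le> CARD('n)"
  shows "has_vertex_coloring E c"
  using assms(1)
proof (induction "c - card (range f)" arbitrary: f rule: less_induct)
  case less
  show ?case
  proof (cases "{..<c} \<subseteq> range f")
    case True
    with less.prems show ?thesis
      by (rule has_vertex_coloring_if_surj_proper_coloring)
  next
    case False
    then obtain k where k: "k < c" "k \<notin> range f"
      by auto
    have "range f \<subset> {..<c}"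
      using less.prems k unfolding proper_coloring_def by auto
    then have fewer: "card (range f) < c"
      by (metis card_lessThan finite_lessThan psubset_card_mono)
    then have "\<not> inj f"
      using assms(2) by (metis card_image order_less_irrefl order_less_le_trans)
    then obtain x y where "f x = f y" "x \<noteq> y"
      unfolding inj_def by blast
    then have "range (f(x := k)) = insert k (range f)"
      by (rule range_fun_upd_collision)
    then have "card (range (f(x := k))) = Suc (card (range f))"
      using k by simp
    then show ?thesis
      using less.hyps[of "f(x := k)"] fewer proper_coloring_fun_upd_unused[OF less.prems k] by simp
  qed
qed

lemma ex_independent_set_iff_ex_isotropic_space:
  fixes E :: "('n::finite) set set"
  shows "(\<exists>S. independent_set E S \<and> card S = s) \<longleftrightarrow>
         (\<exists>U. isotropic_space (graph_matrices E) U \<and> vec.dim U = s)"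
proof
  assume "\<exists>S. independent_set E S \<and> card S = s"
  then show "\<exists>U. isotropic_space (graph_matrices E) U \<and> vec.dim U = s"
    using isotropic_space_coord_subspace dim_coord_subspace by blast
next
  assume "\<exists>U. isotropic_space (graph_matrices E) U \<and> vec.dim U = s"
  then obtain U where U: "isotropic_space (graph_matrices E) U" "vec.dim U = s"
    by blast
  have "s \<le> vec.dim (coord_subspace (joint_support U) :: (complex^'n) set)"
    using vec.dim_subset[OF subset_coord_subspace_joint_support] U(2) by blast
  then have "s \<le> card (joint_support U)"
    by (simp add: dim_coord_subspace)
  then obtain S where "S \<subseteq> joint_support U" "card S = s"
    by (metis obtain_subset_with_card_n)
  then show "\<exists>S. independent_set E S \<and> card S = s"
    using independent_set_subset independent_set_joint_support[OF U(1)] by blast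
qed

lemma isotropic_decomposition_if_has_vertex_coloring:
  fixes E :: "('n::finite) set set"
  assumes "has_vertex_coloring E c"
  shows "isotropic_decomposition (graph_matrices E) c"
proof -
  obtain V :: "nat \<Rightarrow> 'n set" where
    V: "\<forall>k<c. V k \<noteq> {} \<and> independent_set E (V k)" and
    disjoint: "\<forall>k<c. \<forall>l<c. k \<noteq> l \<longrightarrow> V k \<inter> V l = {}" and
    cover: "(\<Union>k<c. V k) = UNIV"
    using assms unfolding has_vertex_coloring_def by blast
  show ?thesis
    unfolding isotropic_decomposition_def
  proof (intro exI[of _ "\<lambda>k. coord_subspace (V k)"] conjI allI impI ballI)
    fix k assume "k < c"
    then show "isotropic_space (graph_matrices E) (coord_subspace (V k))"
      using V by (simp add: isotropic_space_coord_subspace)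
    obtain i where "i \<in> V k"
      using V \<open>k < c\<close> by blast
    then have "axis i (1::complex) \<in> coord_subspace (V k)" "axis i (1::complex) \<noteq> 0"
      by (simp_all add: axis_eq_0_iff)
    then show "coord_subspace (V k) \<noteq> {0 :: complex^'n}"
      by blast
  next
    fix k l and u v :: "complex^'n"
    assume "k < c" "l < c" "k \<noteq> l" "u \<in> coord_subspace (V k)" "v \<in> coord_subspace (V l)"
    then show "herm_inner u v = 0"
      using disjoint by (intro herm_inner_coord_subspaces_disjoint[of "V k" "V l"]) simp_all
  next
    fix w :: "nat \<Rightarrow> complex^'n" and k
    assume "(\<forall>k<c. w k \<in> coord_subspace (V k)) \<and> (\<Sum>k<c. w k) = 0" "k < c"
    then show "w k = 0"
      using coord_subspaces_direct[OF disjoint, of w k] by blast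
  next
    show "vec.span (\<Union>k<c. coord_subspace (V k)) = UNIV"
      using span_coord_subspaces_eq_UNIV[OF cover] .
  qed
qed

lemma has_vertex_coloring_if_isotropic_decomposition:
  fixes E :: "('n::finite) set set"
  assumes "isotropic_decomposition (graph_matrices E) c"
  shows "has_vertex_coloring E c"
proof -
  obtain U :: "nat \<Rightarrow> (complex^'n) set" where
    U: "\<forall>k<c. isotropic_space (graph_matrices E) (U k) \<and> U k \<noteq> {0}" and
    direct: "\<forall>w. (\<forall>k<c. w k \<in> U k) \<and> (\<Sum>k<c. w k) = 0 \<longrightarrow> (\<forall>k<c. w k = 0)" and
    spanning: "vec.span (\<Union>k<c. U k) = UNIV"
    using assms unfolding isotropic_decomposition_def by blast
  have "joint_support (\<Union>k<c. U k) = UNIV"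
    using spanning by (rule joint_support_eq_UNIV_if_span_eq_UNIV)
  then have covered: "\<exists>k<c. x \<in> joint_support (U k)" for x
    unfolding joint_support_def by blast
  define f where "f x = (LEAST k. k < c \<and> x \<in> joint_support (U k))" for x
  have color: "f x < c \<and> x \<in> joint_support (U (f x))" for x
    unfolding f_def using covered[of x] by (metis (mono_tags, lifting) LeastI)
  have "proper_coloring E c f"
    unfolding proper_coloring_def
  proof (intro conjI allI impI)
    show "f x < c" for x
      using color by blast
    fix x y assume "f x = f y"
    then have "x \<in> joint_support (U (f x))" "y \<in> joint_support (U (f x))"
      using color by metis+
    moreover have "independent_set E (joint_support (U (f x)))"
      using U color independent_set_joint_support by blast
    ultimately show "{x, y} \<notin> E"
      unfolding independent_set_def by blast
  qed
  moreover have "c \<le> CARD('n)"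
    using U direct unfolding isotropic_space_def by (intro card_le_CARD_if_direct_sum) auto
  ultimately show ?thesis
    by (rule has_vertex_coloring_if_proper_coloring)
qed

theorem proposition11p2:
  fixes E :: "('n::finite) set set"
  assumes "CARD('n) \<ge> 2"
    and "simple_graph E"
    and "graph_connected E"
  shows "(\<forall>s::nat. (\<exists>S. independent_set E S \<and> card S = s) \<longleftrightarrow>
             (\<exists>U. isotropic_space (graph_matrices E) U \<and> vec.dim U = s)) \<and>
         (\<forall>c::nat. has_vertex_coloring E c \<longleftrightarrow> isotropic_decomposition (graph_matrices E) c)"
  using ex_independent_set_iff_ex_isotropic_space isotropic_decomposition_if_has_vertex_coloring
    has_vertex_coloring_if_isotropic_decomposition by (intro conjI allI iffI) blast+

end
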